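(* Let $N\ge 4$ and write $k(x)=2p(x)$. Then $p(N-2)=1$, $p(N-3)=0$, and for every $x\in\{0,\dots,N-4\}$, $$k(x)=\frac{(N-x)\,(N-x-1-k(x+1))}{(N-x-1)^2-k(x+1)}.$$ Moreover, for every $x\in\{0,\dots,N-2\}$, $2p(x)-1>0$ if $N-x$ is even and $2p(x)-1<0$ if $N-x$ is odd.
   Context: For $\sigma\in\mathcal{S}_N$, $\eta_1(\sigma)$ is the number of fixed points and $\eta_2(\sigma)$ the number of 2-cycles of $\sigma$; $\nu$ is the uniform measure on $\mathcal{S}_N$, and for $x\in\{0,\dots,N\}\setminus\{N-1\}$, $p(x)=\mathbb{E}_\nu[\eta_2\mid\eta_1=x]$. *)

theory Defs
  imports "HOL-Combinatorics.Permutations" Complex_Main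
begin

definition SymN :: "nat \<Rightarrow> (nat \<Rightarrow> nat) set" where
  "SymN N = {\<sigma>. \<sigma> permutes {1..N}}"

definition eta1 :: "nat \<Rightarrow> (nat \<Rightarrow> nat) \<Rightarrow> nat" where
  "eta1 N \<sigma> = card {i \<in> {1..N}. \<sigma> i = i}"

definition eta2 :: "nat \<Rightarrow> (nat \<Rightarrow> nat) \<Rightarrow> nat" where
  "eta2 N \<sigma> = card {{i, \<sigma> i} | i. i \<in> {1..N} \<and> \<sigma> i \<noteq> i \<and> \<sigma> (\<sigma> i) = i}"

text \<open>p(x) = E_nu[eta2 | eta1 = x] for nu the uniform measure on S_N:
  average of eta2 over the permutations with exactly x fixed points.\<close>
definition pcond :: "nat \<Rightarrow> nat \<Rightarrow> real" where
  "pcond N x = (\<Sum>\<sigma> \<in> {\<sigma> \<in> SymN N. eta1 N \<sigma> = x}. real (eta2 N \<sigma>))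
                 / real (card {\<sigma> \<in> SymN N. eta1 N \<sigma> = x})"

end

theory Submission
  imports Defs "HOL-Computational_Algebra.Formal_Power_Series"
begin

text \<open>Put \<open>m = N - x\<close> and let \<open>D\<^sub>n\<close> be the number of derangements of \<open>n\<close> points. A
  permutation with \<open>x\<close> fixed points is a choice of its fixed set together with a derangement of
  the other \<open>m\<close> points, so there are \<open>C(N,x) D\<^sub>m\<close> of them; counting pairs (permutation,
  2-cycle) by first choosing the 2-cycle gives \<open>C(N,2) C(N-2,x) D\<^sub>m\<^sub>-\<^sub>2\<close>. Hence
  \<open>k(x) = m(m-1) D\<^sub>m\<^sub>-\<^sub>2 / D\<^sub>m\<close>. The recursion for \<open>k\<close> is then a rewriting of
  \<open>D\<^sub>m = (m-1)(D\<^sub>m\<^sub>-\<^sub>1 + D\<^sub>m\<^sub>-\<^sub>2)\<close>, and \<open>D\<^sub>m = m D\<^sub>m\<^sub>-\<^sub>1 + (-1)\<^sup>m\<close> gives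
  \<open>k(x) - 1 = (m-1)(-1)\<^sup>m / D\<^sub>m\<close>, whose sign alternates. \<open>D\<^sub>n\<close> is identified with the
  subfactorial \<open>n! \<Sum>\<^sub>j\<^sub>\<le>\<^sub>n (-1)\<^sup>j/j!\<close> through the binomial identity \<open>\<Sum>\<^sub>k C(n,k) D\<^sub>k = n!\<close>.\<close>

definition subfact :: "nat \<Rightarrow> real" where
  "subfact n = fact n * (\<Sum>j\<le>n. (-1)^j / fact j)"

lemma subfact_0 [simp]: "subfact 0 = 1"
  by (simp add: subfact_def)

lemma subfact_Suc: "subfact (Suc n) = real (Suc n) * subfact n + (-1)^Suc n"
proof -
  have "fact (Suc n) * ((-1::real)^Suc n / fact (Suc n)) = (-1)^Suc n" by simp
  moreover have "(fact (Suc n) :: real) = real (Suc n) * fact n" by simp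
  ultimately show ?thesis
    unfolding subfact_def by (simp only: sum.atMost_Suc distrib_left mult.assoc)
qed

lemma subfact_1 [simp]: "subfact (Suc 0) = 0"
  by (simp add: subfact_def)

lemma subfact_2 [simp]: "subfact 2 = 1"
  by (simp add: subfact_def numeral_2_eq_2)

lemma subfact_Suc_Suc: "subfact (n + 2) = real (n + 1) * (subfact (n + 1) + subfact n)"
proof -
  have "subfact (n + 2) = real (n + 2) * subfact (n + 1) + (-1)^n"
    using subfact_Suc[of "n + 1"] by simp
  moreover have "subfact (n + 1) = real (n + 1) * subfact n - (-1)^n"
    using subfact_Suc[of n] by simp
  ultimately show ?thesis by (simp add: algebra_simps)
qed

lemma subfact_ge_1: "subfact (n + 2) \<ge> 1"
proof (induction n)
  case (Suc n)
  have "subfact (n + 3) = real (n + 3) * subfact (n + 2) + (-1)^(n + 3)"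
    using subfact_Suc[of "n + 2"] by (simp add: eval_nat_numeral)
  moreover have "(-1::real)^(n + 3) \<ge> -1" by (cases "even n") auto
  moreover have "real (n + 3) * subfact (n + 2) \<ge> 3"
    using Suc mult_mono[of 3 "real (n + 3)" 1 "subfact (n + 2)"] by simp
  ultimately show ?case by (simp add: eval_nat_numeral)
qed (simp add: subfact_def)

text \<open>Multiplying the exponential generating function of \<open>subfact\<close>, which is
  \<open>e\<^sup>-\<^sup>x / (1 - x)\<close>, by \<open>e\<^sup>x\<close> gives \<open>1 / (1 - x)\<close>.\<close>
lemma binomial_sum_subfact: "(\<Sum>k\<le>n. real (n choose k) * subfact k) = fact n"
proof -
  define E :: "real fps" where "E = fps_exp (-1) * Abs_fps (\<lambda>_. 1)"
  have E_nth: "fps_nth E k = subfact k / fact k" for k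
    unfolding E_def subfact_def fps_mult_nth
    by (simp add: atLeast0AtMost power_minus' divide_simps)
  have "fps_exp 1 * E = Abs_fps (\<lambda>_. 1)"
    unfolding E_def by (simp add: mult.assoc[symmetric] fps_exp_add_mult[symmetric])
  hence "(\<Sum>i=0..n. 1 / fact i * (subfact (n - i) / fact (n - i))) = 1"
    using fps_mult_nth[of "fps_exp 1" E n] by (simp add: E_nth)
  moreover have "(\<Sum>i=0..n. real (n choose i) * subfact (n - i))
      = fact n * (\<Sum>i=0..n. 1 / fact i * (subfact (n - i) / fact (n - i)))"
    by (simp add: sum_distrib_left binomial_fact)
  ultimately have "(\<Sum>i=0..n. real (n choose i) * subfact (n - i)) = fact n"
    by simp
  also have "(\<Sum>i=0..n. real (n choose i) * subfact (n - i)) = (\<Sum>k\<le>n. real (n choose k) * subfact k)"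
    by (rule sum.reindex_bij_witness[of _ "\<lambda>i. n - i" "\<lambda>i. n - i"])
       (auto simp: binomial_symmetric[symmetric])
  finally show ?thesis .
qed

lemma binomial_sum_eq_fact_imp_subfact:
  fixes d :: "nat \<Rightarrow> real"
  assumes "\<And>n. (\<Sum>k\<le>n. real (n choose k) * d k) = fact n"
  shows "d n = subfact n"
proof (induction n rule: less_induct)
  case (less n)
  have "(\<Sum>k\<le>n. real (n choose k) * d k) = (\<Sum>k\<le>n. real (n choose k) * subfact k)"
    using assms binomial_sum_subfact by simp
  moreover have "(\<Sum>k<n. real (n choose k) * d k) = (\<Sum>k<n. real (n choose k) * subfact k)"
    using less by simp
  ultimately show ?case by (simp add: lessThan_Suc_atMost[symmetric])
qed

definition derangements :: "'a set \<Rightarrow> ('a \<Rightarrow> 'a) set" where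
  "derangements A = {\<pi>. \<pi> permutes A \<and> (\<forall>x\<in>A. \<pi> x \<noteq> x)}"

definition perms_with_fixpoints :: "'a set \<Rightarrow> nat \<Rightarrow> ('a \<Rightarrow> 'a) set" where
  "perms_with_fixpoints A x = {\<sigma>. \<sigma> permutes A \<and> card {i\<in>A. \<sigma> i = i} = x}"

lemma finite_derangements: "finite A \<Longrightarrow> finite (derangements A)"
  unfolding derangements_def by (rule finite_subset[OF _ finite_permutations]) auto

lemma finite_perms_with_fixpoints: "finite A \<Longrightarrow> finite (perms_with_fixpoints A x)"
  unfolding perms_with_fixpoints_def by (rule finite_subset[OF _ finite_permutations]) auto

lemma card_derangements_eq:
  assumes "finite A" "finite B" "card A = card B"
  shows "card (derangements A) = card (derangements B)"
proof -
  obtain f where "bij_betw f A B"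
    using assms finite_same_card_bij by blast
  from bij_betw_same_card[OF bij_betw_derangements[OF this]] show ?thesis
    unfolding derangements_def .
qed

lemma permutes_Diff_fixed:
  assumes "p permutes A" "\<And>x. x \<in> B \<Longrightarrow> p x = x"
  shows "p permutes (A - B)"
  using assms unfolding permutes_def by (metis Diff_iff)

lemma fixpoints_of_derangement:
  assumes "\<sigma> \<in> derangements (A - S)" "S \<subseteq> A"
  shows "{i\<in>A. \<sigma> i = i} = S"
  using assms unfolding derangements_def by (auto simp: permutes_not_in)

lemma perms_with_fixpoints_eq_UN_derangements:
  "perms_with_fixpoints A x = (\<Union>S\<in>{S. S \<subseteq> A \<and> card S = x}. derangements (A - S))"
proof (intro equalityI subsetI)
  fix \<sigma> assume \<sigma>: "\<sigma> \<in> perms_with_fixpoints A x"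
  let ?S = "{i\<in>A. \<sigma> i = i}"
  have "\<sigma> permutes (A - ?S)"
    using \<sigma> unfolding perms_with_fixpoints_def by (intro permutes_Diff_fixed) auto
  hence "\<sigma> \<in> derangements (A - ?S)" unfolding derangements_def by auto
  moreover have "?S \<subseteq> A \<and> card ?S = x"
    using \<sigma> unfolding perms_with_fixpoints_def by auto
  ultimately show "\<sigma> \<in> (\<Union>S\<in>{S. S \<subseteq> A \<and> card S = x}. derangements (A - S))"
    by blast
next
  fix \<sigma> assume "\<sigma> \<in> (\<Union>S\<in>{S. S \<subseteq> A \<and> card S = x}. derangements (A - S))"
  then obtain S where S: "S \<subseteq> A" "card S = x" "\<sigma> \<in> derangements (A - S)" by auto
  have "\<sigma> permutes A"
    using S(3) unfolding derangements_def by (auto intro: permutes_subset)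
  thus "\<sigma> \<in> perms_with_fixpoints A x"
    using fixpoints_of_derangement[OF S(3,1)] S(2) unfolding perms_with_fixpoints_def by auto
qed

lemma card_perms_with_fixpoints_derangements:
  assumes "finite A"
  shows "card (perms_with_fixpoints A x) = (card A choose x) * card (derangements {..<card A - x})"
proof -
  let ?Ss = "{S. S \<subseteq> A \<and> card S = x}"
  have disjoint: "derangements (A - S) \<inter> derangements (A - T) = {}"
    if "S \<in> ?Ss" "T \<in> ?Ss" "S \<noteq> T" for S T
    using that fixpoints_of_derangement by blast
  have "card (perms_with_fixpoints A x) = (\<Sum>S\<in>?Ss. card (derangements (A - S)))"
    unfolding perms_with_fixpoints_eq_UN_derangements
    using assms disjoint by (intro card_UN_disjoint) (auto intro: finite_derangements)
  also have "\<dots> = (\<Sum>S\<in>?Ss. card (derangements {..<card A - x}))"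
    using assms by (intro sum.cong refl card_derangements_eq)
      (auto simp: card_Diff_subset finite_subset)
  also have "\<dots> = (card A choose x) * card (derangements {..<card A - x})"
    using n_subsets[OF assms] by simp
  finally show ?thesis .
qed

lemma binomial_sum_card_derangements:
  "(\<Sum>k\<le>n. real (n choose k) * real (card (derangements {..<k}))) = fact n"
proof -
  let ?A = "{..<n}"
  have "card {i\<in>?A. \<sigma> i = i} \<le> n" for \<sigma>
    using card_mono[of ?A "{i\<in>?A. \<sigma> i = i}"] by auto
  hence perms: "{\<sigma>. \<sigma> permutes ?A} = (\<Union>x\<le>n. perms_with_fixpoints ?A x)"
    unfolding perms_with_fixpoints_def by auto
  have disjoint: "perms_with_fixpoints ?A x \<inter> perms_with_fixpoints ?A y = {}" if "x \<noteq> y" for x y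
    using that unfolding perms_with_fixpoints_def by auto
  have "fact n = card {\<sigma>. \<sigma> permutes ?A}" by (simp add: card_permutations)
  also have "\<dots> = (\<Sum>x\<le>n. card (perms_with_fixpoints ?A x))"
    unfolding perms using disjoint
    by (intro card_UN_disjoint) (simp_all add: finite_perms_with_fixpoints)
  also have "\<dots> = (\<Sum>x\<le>n. (n choose x) * card (derangements {..<n - x}))"
    by (simp add: card_perms_with_fixpoints_derangements)
  also have "\<dots> = (\<Sum>k\<le>n. (n choose k) * card (derangements {..<k}))"
    by (rule sum.reindex_bij_witness[of _ "\<lambda>i. n - i" "\<lambda>i. n - i"])
       (auto simp: binomial_symmetric[symmetric])
  finally have "real (fact n) = real (\<Sum>k\<le>n. (n choose k) * card (derangements {..<k}))"
    by (rule arg_cong)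
  then show ?thesis
    by (simp add: of_nat_sum)
qed

lemma card_derangements:
  assumes "finite A"
  shows "real (card (derangements A)) = subfact (card A)"
proof -
  have "card (derangements A) = card (derangements {..<card A})"
    using assms by (intro card_derangements_eq) auto
  with binomial_sum_eq_fact_imp_subfact[OF binomial_sum_card_derangements] show ?thesis
    by simp
qed

lemma card_perms_with_fixpoints:
  assumes "finite A"
  shows "real (card (perms_with_fixpoints A x)) = real (card A choose x) * subfact (card A - x)"
  using card_perms_with_fixpoints_derangements[OF assms] card_derangements[of "{..<card A - x}"]
  by simp

definition two_cycles :: "'a set \<Rightarrow> ('a \<Rightarrow> 'a) \<Rightarrow> 'a set set" where
  "two_cycles A \<sigma> = {{i, \<sigma> i} | i. i \<in> A \<and> \<sigma> i \<noteq> i \<and> \<sigma> (\<sigma> i) = i}"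

lemma two_cycles_subset:
  assumes "\<sigma> permutes A"
  shows "two_cycles A \<sigma> \<subseteq> {P. P \<subseteq> A \<and> card P = 2}"
  using assms unfolding two_cycles_def by (auto simp: permutes_in_image)

lemma doubleton_in_two_cycles_iff:
  assumes "i \<in> A" "j \<in> A" "i \<noteq> j"
  shows "{i, j} \<in> two_cycles A \<sigma> \<longleftrightarrow> \<sigma> i = j \<and> \<sigma> j = i"
  using assms unfolding two_cycles_def by (auto simp: doubleton_eq_iff)

lemma sum_card_Collect_swap:
  assumes "finite X" "finite Y"
  shows "(\<Sum>x\<in>X. card {y\<in>Y. R x y}) = (\<Sum>y\<in>Y. card {x\<in>X. R x y})"
proof -
  have card_eq_sum: "card {z\<in>Z. Q z} = (\<Sum>z\<in>Z. if Q z then 1 else 0)" if "finite Z" for Z Q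
    using sum.inter_filter[OF that, of "\<lambda>_. 1::nat" Q] by simp
  show ?thesis using assms by (simp add: card_eq_sum sum.swap[of _ X])
qed

text \<open>Composing with the transposition \<open>(i j)\<close> turns the permutations that swap \<open>i\<close>
  and \<open>j\<close> into the permutations of \<open>A - {i, j}\<close>, keeping all other fixed points.\<close>
lemma card_perms_with_fixpoints_swapping:
  assumes "i \<in> A" "j \<in> A" "i \<noteq> j"
  shows "card {\<sigma>\<in>perms_with_fixpoints A x. \<sigma> i = j \<and> \<sigma> j = i}
       = card (perms_with_fixpoints (A - {i, j}) x)"
proof -
  let ?t = "transpose i j"
  have fixpoints_eq: "{k\<in>A - {i, j}. (?t \<circ> \<sigma>) k = k} = {k\<in>A. \<sigma> k = k}"
    if "\<sigma> permutes A" "\<sigma> i = j" "\<sigma> j = i" for \<sigma>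
  proof -
    have "\<sigma> k \<noteq> i \<and> \<sigma> k \<noteq> j" if "k \<notin> {i, j}" for k
      using that \<open>\<sigma> i = j\<close> \<open>\<sigma> j = i\<close> permutes_inj[OF \<open>\<sigma> permutes A\<close>]
      by (metis insertCI inj_eq)
    thus ?thesis using that assms(3) by (auto simp: transpose_def)
  qed
  have "bij_betw ((\<circ>) ?t) {\<sigma>\<in>perms_with_fixpoints A x. \<sigma> i = j \<and> \<sigma> j = i}
      (perms_with_fixpoints (A - {i, j}) x)"
  proof (rule bij_betw_byWitness[of _ "(\<circ>) ?t"])
    show "(\<circ>) ?t ` {\<sigma>\<in>perms_with_fixpoints A x. \<sigma> i = j \<and> \<sigma> j = i}
        \<subseteq> perms_with_fixpoints (A - {i, j}) x"
    proof (intro image_subsetI)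
      fix \<sigma> assume "\<sigma> \<in> {\<sigma>\<in>perms_with_fixpoints A x. \<sigma> i = j \<and> \<sigma> j = i}"
      hence \<sigma>: "\<sigma> \<in> perms_with_fixpoints A x" "\<sigma> i = j" "\<sigma> j = i" by simp_all
      hence p: "\<sigma> permutes A" unfolding perms_with_fixpoints_def by simp
      have "?t \<circ> \<sigma> permutes A"
        using p assms by (intro permutes_compose permutes_swap_id)
      hence "?t \<circ> \<sigma> permutes (A - {i, j})"
        by (rule permutes_Diff_fixed) (use \<sigma> in auto)
      thus "?t \<circ> \<sigma> \<in> perms_with_fixpoints (A - {i, j}) x"
        using fixpoints_eq[OF p \<sigma>(2,3)] \<sigma>(1) unfolding perms_with_fixpoints_def by simp
    qed
    show "(\<circ>) ?t ` perms_with_fixpoints (A - {i, j}) x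
        \<subseteq> {\<sigma>\<in>perms_with_fixpoints A x. \<sigma> i = j \<and> \<sigma> j = i}"
    proof (intro image_subsetI)
      fix \<tau> assume \<tau>: "\<tau> \<in> perms_with_fixpoints (A - {i, j}) x"
      hence pt: "\<tau> permutes (A - {i, j})" unfolding perms_with_fixpoints_def by simp
      have ij: "(?t \<circ> \<tau>) i = j" "(?t \<circ> \<tau>) j = i"
        using permutes_not_in[OF pt] by auto
      have "\<tau> permutes A" using pt by (rule permutes_subset) auto
      hence p: "?t \<circ> \<tau> permutes A"
        using assms by (intro permutes_compose permutes_swap_id)
      have "?t \<circ> (?t \<circ> \<tau>) = \<tau>" by (simp add: fun_eq_iff)
      thus "?t \<circ> \<tau> \<in> {\<sigma>\<in>perms_with_fixpoints A x. \<sigma> i = j \<and> \<sigma> j = i}"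
        using fixpoints_eq[OF p ij] \<tau> p ij unfolding perms_with_fixpoints_def by simp
    qed
  qed (simp_all add: fun_eq_iff)
  thus ?thesis by (rule bij_betw_same_card)
qed

lemma sum_card_two_cycles:
  assumes "finite A"
  shows "real (\<Sum>\<sigma>\<in>perms_with_fixpoints A x. card (two_cycles A \<sigma>))
       = real (card A choose 2) * real (card A - 2 choose x) * subfact (card A - 2 - x)"
proof -
  let ?pairs = "{P. P \<subseteq> A \<and> card P = 2}"
  have "(\<Sum>\<sigma>\<in>perms_with_fixpoints A x. card (two_cycles A \<sigma>))
      = (\<Sum>\<sigma>\<in>perms_with_fixpoints A x. card {P\<in>?pairs. P \<in> two_cycles A \<sigma>})"
    using two_cycles_subset
    by (intro sum.cong refl arg_cong[of _ _ card]) (auto simp: perms_with_fixpoints_def)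
  also have "\<dots> = (\<Sum>P\<in>?pairs. card {\<sigma>\<in>perms_with_fixpoints A x. P \<in> two_cycles A \<sigma>})"
    using assms by (intro sum_card_Collect_swap finite_perms_with_fixpoints) auto
  also have "\<dots> = (\<Sum>P\<in>?pairs. card (perms_with_fixpoints (A - P) x))"
  proof (intro sum.cong refl)
    fix P assume "P \<in> ?pairs"
    then obtain i j where P: "P = {i, j}" "i \<in> A" "j \<in> A" "i \<noteq> j"
      by (auto simp: card_2_iff)
    show "card {\<sigma>\<in>perms_with_fixpoints A x. P \<in> two_cycles A \<sigma>}
        = card (perms_with_fixpoints (A - P) x)"
      unfolding P(1) doubleton_in_two_cycles_iff[OF P(2-4)]
      by (rule card_perms_with_fixpoints_swapping[OF P(2-4)])
  qed
  finally have "real (\<Sum>\<sigma>\<in>perms_with_fixpoints A x. card (two_cycles A \<sigma>))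
      = (\<Sum>P\<in>?pairs. real (card (perms_with_fixpoints (A - P) x)))"
    by simp
  also have "\<dots> = (\<Sum>P\<in>?pairs. real (card A - 2 choose x) * subfact (card A - 2 - x))"
    using assms
    by (intro sum.cong refl) (auto simp: card_perms_with_fixpoints card_Diff_subset finite_subset)
  also have "\<dots> = real (card A choose 2) * real (card A - 2 choose x) * subfact (card A - 2 - x)"
    using n_subsets[OF assms, of 2] by simp
  finally show ?thesis .
qed

lemma pcond_eq_subfact:
  assumes "x + 2 \<le> N"
  shows "pcond N x = real (N - x choose 2) * subfact (N - x - 2) / subfact (N - x)"
proof -
  have class_eq: "{\<sigma> \<in> SymN N. eta1 N \<sigma> = x} = perms_with_fixpoints {1..N} x"
    unfolding SymN_def eta1_def perms_with_fixpoints_def by auto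
  have num: "(\<Sum>\<sigma> \<in> {\<sigma> \<in> SymN N. eta1 N \<sigma> = x}. real (eta2 N \<sigma>))
      = real (N choose 2) * real (N - 2 choose x) * subfact (N - 2 - x)"
    using sum_card_two_cycles[of "{1..N}" x]
    unfolding class_eq eta2_def two_cycles_def of_nat_sum by simp
  have den: "real (card {\<sigma> \<in> SymN N. eta1 N \<sigma> = x}) = real (N choose x) * subfact (N - x)"
    unfolding class_eq using card_perms_with_fixpoints[of "{1..N}" x] by simp
  have binomials: "(N choose x) * (N - x choose 2) = (N choose 2) * (N - 2 choose x)"
    using choose_mult[of x "x + 2" N] choose_mult[of 2 "x + 2" N] assms
    by (simp add: binomial_symmetric[of x "x + 2", simplified] mult.commute)
  have "pcond N x = real ((N choose x) * (N - x choose 2)) * subfact (N - x - 2)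
      / (real (N choose x) * subfact (N - x))"
    unfolding pcond_def num den binomials by (simp add: diff_commute)
  also have "\<dots> = real (N - x choose 2) * subfact (N - x - 2) / subfact (N - x)"
    using assms by simp
  finally show ?thesis .
qed

definition subfact_ratio :: "nat \<Rightarrow> real" where
  "subfact_ratio n = real n * (real n - 1) * subfact (n - 2) / subfact n"

lemma two_pcond_eq_subfact_ratio:
  assumes "x + 2 \<le> N"
  shows "2 * pcond N x = subfact_ratio (N - x)"
proof -
  have "2 * real (n choose 2) = real n * (real n - 1)" if "n \<ge> 2" for n
    using that by (induction n rule: dec_induct) (simp_all add: algebra_simps numeral_2_eq_2)
  thus ?thesis
    using assms unfolding pcond_eq_subfact[OF assms] subfact_ratio_def by simp
qed

lemma subfact_ratio_recurrence:
  "subfact_ratio (j + 4)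
     = real (j + 4) * (real (j + 4) - 1 - subfact_ratio (j + 3))
       / ((real (j + 4) - 1)^2 - subfact_ratio (j + 3))"
proof -
  define a where "a = real (j + 3) * real (j + 2)"
  define s1 s2 s3 where "s1 = subfact (j + 1)" and "s2 = subfact (j + 2)" and "s3 = subfact (j + 3)"
  have s3: "s3 = real (j + 2) * (s2 + s1)"
    using subfact_Suc_Suc[of "j + 1"] by (simp add: s1_def s2_def s3_def eval_nat_numeral)
  have s4: "subfact (j + 4) = real (j + 3) * (s3 + s2)"
    using subfact_Suc_Suc[of "j + 2"] by (simp add: s2_def s3_def eval_nat_numeral)
  have "s2 \<ge> 1" "s3 \<ge> 1"
    using subfact_ge_1[of j] subfact_ge_1[of "j + 1"] by (simp_all add: s2_def s3_def eval_nat_numeral)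
  moreover have "a > 0" unfolding a_def by simp
  moreover have ratio3: "subfact_ratio (j + 3) = a * s1 / s3"
    by (simp add: subfact_ratio_def a_def s1_def s3_def eval_nat_numeral)
  ultimately have num: "real (j + 4) - 1 - subfact_ratio (j + 3) = a * s2 / s3"
    and den: "(real (j + 4) - 1)^2 - subfact_ratio (j + 3) = a * (s3 + s2) / s3"
    unfolding a_def by (simp_all add: field_simps power2_eq_square s3)
  have "subfact_ratio (j + 4) = real (j + 4) * real (j + 3) * s2 / subfact (j + 4)"
    by (simp add: subfact_ratio_def s2_def eval_nat_numeral)
  also have "\<dots> = real (j + 4) * s2 / (s3 + s2)"
    unfolding s4 by simp
  also have "\<dots> = real (j + 4) * (a * s2 / s3) / (a * (s3 + s2) / s3)"
    using \<open>a > 0\<close> \<open>s2 \<ge> 1\<close> \<open>s3 \<ge> 1\<close> by (simp add: divide_simps)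
  finally show ?thesis
    unfolding num den .
qed

lemma subfact_ratio_minus_1:
  "subfact_ratio (j + 2) - 1 = real (j + 1) * (-1)^j / subfact (j + 2)"
proof -
  have "real (j + 2) * real (j + 1) * subfact j - subfact (j + 2) = real (j + 1) * (-1)^j"
    using subfact_Suc[of "j + 1"] subfact_Suc[of j] by (simp add: algebra_simps)
  moreover have "subfact (j + 2) \<ge> 1" by (rule subfact_ge_1)
  ultimately show ?thesis
    unfolding subfact_ratio_def by (simp add: field_simps)
qed

theorem mainTheorem6:
  fixes N :: nat and k :: "nat \<Rightarrow> real"
  assumes "N \<ge> 4"
    and k_def: "\<And>x. k x = 2 * pcond N x"
  shows "pcond N (N - 2) = 1 \<and> pcond N (N - 3) = 0
    \<and> (\<forall>x \<le> N - 4. k x = real (N - x) * (real (N - x) - 1 - k (x + 1))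
                           / ((real (N - x) - 1)^2 - k (x + 1)))
    \<and> (\<forall>x \<le> N - 2. (even (N - x) \<longrightarrow> 2 * pcond N x - 1 > 0)
                    \<and> (odd (N - x) \<longrightarrow> 2 * pcond N x - 1 < 0))"
proof (intro conjI allI impI)
  have "subfact_ratio 2 = 2" "subfact_ratio 3 = 0"
    by (simp_all add: subfact_ratio_def)
  moreover have "2 * pcond N (N - 2) = subfact_ratio 2" "2 * pcond N (N - 3) = subfact_ratio 3"
    using two_pcond_eq_subfact_ratio[of "N - 2" N] two_pcond_eq_subfact_ratio[of "N - 3" N]
      assms(1) by simp_all
  ultimately show "pcond N (N - 2) = 1" "pcond N (N - 3) = 0"
    by simp_all
next
  fix x assume "x \<le> N - 4"
  define j where "j = N - x - 4"
  have j: "x + 2 \<le> N" "x + 1 + 2 \<le> N" "N - x = j + 4" "N - (x + 1) = j + 3"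
    using \<open>x \<le> N - 4\<close> assms(1) unfolding j_def by linarith+
  have "k x = subfact_ratio (j + 4)" "k (x + 1) = subfact_ratio (j + 3)"
    unfolding k_def two_pcond_eq_subfact_ratio[OF j(1)] two_pcond_eq_subfact_ratio[OF j(2)] j(3,4)
    by simp_all
  thus "k x = real (N - x) * (real (N - x) - 1 - k (x + 1)) / ((real (N - x) - 1)^2 - k (x + 1))"
    unfolding j(3) by (simp only: subfact_ratio_recurrence)
next
  fix x assume "x \<le> N - 2"
  define j where "j = N - x - 2"
  have j: "x + 2 \<le> N" "N - x = j + 2"
    using \<open>x \<le> N - 2\<close> assms(1) unfolding j_def by linarith+
  have diff: "2 * pcond N x - 1 = real (j + 1) * (-1)^j / subfact (j + 2)"
    unfolding two_pcond_eq_subfact_ratio[OF j(1)] j(2) by (rule subfact_ratio_minus_1)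
  have pos: "subfact (j + 2) > 0"
    using subfact_ge_1[of j] by linarith
  show "2 * pcond N x - 1 > 0" if "even (N - x)"
    using that pos unfolding diff j(2) by simp
  show "2 * pcond N x - 1 < 0" if "odd (N - x)"
    using that pos unfolding diff j(2) by (simp add: divide_neg_pos)
qed

end
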